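(* Let $\|\cdot\|$ be a Euclidean norm on $\mathbb{R}^d$ and $|\cdot|$ another norm on $\mathbb{R}^d$. Then there exists $\lambda<1$ (depending on the equivalence constants of the two norms) such that every curve $\gamma:I\to\mathbb{R}^d$ that is self-expanded with respect to $|\cdot|$ is a $\lambda$-curve with respect to $\|\cdot\|$.
   Context: $I\subset\mathbb{R}$ is an interval. A curve $\gamma:I\to\mathbb{R}^d$ is self-expanded with respect to a norm $|\cdot|$ if for all $t_1\le t_2\le t_3$ in $I$: $|\gamma(t_1)-\gamma(t_2)|\le|\gamma(t_1)-\gamma(t_3)|$. For $\lambda<1$, $\gamma$ is a $\lambda$-curve with respect to $\|\cdot\|$ if for all $t_1\le t_2\le t_3$ in $I$: $\|\gamma(t_1)-\gamma(t_2)\|\le\|\gamma(t_1)-\gamma(t_3)\|+\lambda\|\gamma(t_2)-\gamma(t_3)\|$. *)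

theory Defs
  imports "HOL-Analysis.Analysis"
begin

text \<open>A norm on the space R^d (represented as real^'n, d = CARD('n)).\<close>
definition is_norm :: "(real^'n \<Rightarrow> real) \<Rightarrow> bool" where
  "is_norm N \<longleftrightarrow>
     (\<forall>x. 0 \<le> N x) \<and> (\<forall>x. N x = 0 \<longleftrightarrow> x = 0) \<and>
     (\<forall>c x. N (c *\<^sub>R x) = \<bar>c\<bar> * N x) \<and>
     (\<forall>x y. N (x + y) \<le> N x + N y)"

definition is_inner_product :: "(real^'n \<Rightarrow> real^'n \<Rightarrow> real) \<Rightarrow> bool" where
  "is_inner_product B \<longleftrightarrow>
     (\<forall>x y. B x y = B y x) \<and>
     (\<forall>x y z. B (x + y) z = B x z + B y z) \<and>
     (\<forall>c x y. B (c *\<^sub>R x) y = c * B x y) \<and>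
     (\<forall>x. x \<noteq> 0 \<longrightarrow> 0 < B x x)"

definition euclidean_norm :: "(real^'n \<Rightarrow> real) \<Rightarrow> bool" where
  "euclidean_norm N \<longleftrightarrow> (\<exists>B. is_inner_product B \<and> (\<forall>x. N x = sqrt (B x x)))"

definition self_expanded :: "(real^'n \<Rightarrow> real) \<Rightarrow> real set \<Rightarrow> (real \<Rightarrow> real^'n) \<Rightarrow> bool" where
  "self_expanded N I \<gamma> \<longleftrightarrow>
     (\<forall>t1\<in>I. \<forall>t2\<in>I. \<forall>t3\<in>I. t1 \<le> t2 \<and> t2 \<le> t3 \<longrightarrow>
        N (\<gamma> t1 - \<gamma> t2) \<le> N (\<gamma> t1 - \<gamma> t3))"

definition lambda_curve :: "real \<Rightarrow> (real^'n \<Rightarrow> real) \<Rightarrow> real set \<Rightarrow> (real \<Rightarrow> real^'n) \<Rightarrow> bool" where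
  "lambda_curve l N I \<gamma> \<longleftrightarrow>
     (\<forall>t1\<in>I. \<forall>t2\<in>I. \<forall>t3\<in>I. t1 \<le> t2 \<and> t2 \<le> t3 \<longrightarrow>
        N (\<gamma> t1 - \<gamma> t2) \<le> N (\<gamma> t1 - \<gamma> t3) + l * N (\<gamma> t2 - \<gamma> t3))"

end

theory Submission
  imports Defs
begin

text \<open>Write \<open>E\<close> for the Euclidean norm and \<open>N\<close> for the other one, with
  \<open>a E \<le> N \<le> b E\<close>. For \<open>t\<^sub>1 \<le> t\<^sub>2 \<le> t\<^sub>3\<close> put \<open>v = \<gamma> t\<^sub>1 - \<gamma> t\<^sub>3\<close> and
  \<open>w = \<gamma> t\<^sub>3 - \<gamma> t\<^sub>2\<close>; self-expansion says \<open>N (v + w) \<le> N v\<close>. Decomposing \<open>w\<close>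
  into its components along and orthogonal to \<open>v\<close> and comparing \<open>N\<close>-lengths shows
  that the cosine of the angle between \<open>v\<close> and \<open>w\<close> is at most
  \<open>s = b / sqrt (a\<^sup>2 + b\<^sup>2) < 1\<close>; moreover \<open>E w \<le> (b/a + 1) E v\<close>. Expanding
  \<open>E (v + w)\<^sup>2\<close> with these two bounds gives \<open>E (v + w) \<le> E v + \<lambda> E w\<close> for a
  \<open>\<lambda> < 1\<close> depending only on \<open>a\<close> and \<open>b\<close>.\<close>

definition expansion_lambda :: "real \<Rightarrow> real \<Rightarrow> real" where
  "expansion_lambda a b = 1 - (1 - b / sqrt (a\<^sup>2 + b\<^sup>2)) / (b / a + 2)"

lemma divide_sqrt_sum_squares_less_one:
  fixes a b :: real
  assumes "a \<noteq> 0"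
  shows "b / sqrt (a\<^sup>2 + b\<^sup>2) < 1"
proof -
  have "\<bar>b\<bar> < sqrt (a\<^sup>2 + b\<^sup>2)"
    using assms by (intro real_less_rsqrt) simp
  then have "b < sqrt (a\<^sup>2 + b\<^sup>2)" "0 < sqrt (a\<^sup>2 + b\<^sup>2)"
    by linarith+
  then show ?thesis
    by (simp add: divide_less_eq)
qed

lemma expansion_lambda_less_one:
  fixes a b :: real
  assumes "0 < a" "0 < b"
  shows "expansion_lambda a b < 1"
proof -
  have "0 < b / a + 2"
    using assms by (simp add: add_pos_pos)
  then show ?thesis
    using divide_sqrt_sum_squares_less_one[of a b] assms(1) unfolding expansion_lambda_def by simp
qed

lemma inner_product_laws:
  assumes "is_inner_product B"
  shows "B x y = B y x"
    and "B (x + y) z = B x z + B y z" "B z (x + y) = B z x + B z y"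
    and "B (x - y) z = B x z - B y z" "B z (x - y) = B z x - B z y"
    and "B (c *\<^sub>R x) y = c * B x y" "B x (c *\<^sub>R y) = c * B x y"
    and "B (- x) (- x) = B x x"
    and "0 \<le> B x x" "B x x = 0 \<longleftrightarrow> x = 0"
proof -
  have sym: "\<And>x y. B x y = B y x" and add: "\<And>x y z. B (x + y) z = B x z + B y z"
    and scale: "\<And>c x y. B (c *\<^sub>R x) y = c * B x y" and pos: "\<And>x. x \<noteq> 0 \<Longrightarrow> 0 < B x x"
    using assms unfolding is_inner_product_def by auto
  have zero: "B 0 y = 0" for y
    using scale[of 0 0 y] by simp
  have diff: "B (x - y) z = B x z - B y z" for x y z
    using add[of "x - y" y z] by simp
  show "B x y = B y x" "B (x + y) z = B x z + B y z" "B (c *\<^sub>R x) y = c * B x y"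
    by (fact sym add scale)+
  show "B z (x + y) = B z x + B z y" "B x (c *\<^sub>R y) = c * B x y" "B z (x - y) = B z x - B z y"
    using add scale diff sym by metis+
  show "B (x - y) z = B x z - B y z"
    by (fact diff)
  show "B (- x) (- x) = B x x"
    using scale[of "-1" x "- x"] scale[of "-1" x x] sym by (metis minus_minus mult_minus1 scaleR_minus1_left)
  show "0 \<le> B x x" "B x x = 0 \<longleftrightarrow> x = 0"
    using pos[of x] zero by (cases "x = 0"; auto)+
qed

lemma inner_product_square_sum:
  assumes "is_inner_product B"
  shows "B (v + w) (v + w) = B v v + 2 * B v w + B w w"
  using inner_product_laws[OF assms] by (simp add: algebra_simps)

lemma inner_product_orthogonal_part:
  assumes B: "is_inner_product B" and "B v v \<noteq> 0"
  shows "B (w - (B v w / B v v) *\<^sub>R v) (w - (B v w / B v v) *\<^sub>R v) = B w w - (B v w)\<^sup>2 / B v v"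
proof -
  note laws = inner_product_laws[OF B]
  define k where "k = B v w / B v v"
  have "B (w - k *\<^sub>R v) (w - k *\<^sub>R v) = B w w - 2 * k * B v w + k\<^sup>2 * B v v"
    using laws(1)[of w v] by (simp add: laws(4,5,6,7) algebra_simps power2_eq_square)
  also have "\<dots> = B w w - (B v w)\<^sup>2 / B v v"
    using assms(2) unfolding k_def by (simp add: field_simps power2_eq_square)
  finally show ?thesis
    unfolding k_def .
qed

lemma inner_product_Cauchy_Schwarz:
  assumes B: "is_inner_product B"
  shows "(B v w)\<^sup>2 \<le> B v v * B w w"
proof (cases "v = 0")
  case True
  then show ?thesis
    using inner_product_laws(6)[OF B, of 0 0 w] by (simp add: inner_product_laws(9)[OF B])
next
  case False
  then have "0 < B v v"
    using inner_product_laws(9,10)[OF B, of v] by simp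
  moreover have "0 \<le> B w w - (B v w)\<^sup>2 / B v v"
    using inner_product_orthogonal_part[OF B] inner_product_laws(9)[OF B] \<open>0 < B v v\<close>
    by (metis less_irrefl)
  ultimately show ?thesis
    by (simp add: field_simps)
qed

lemma inner_product_abs_le:
  assumes "is_inner_product B"
  shows "\<bar>B v w\<bar> \<le> sqrt (B v v) * sqrt (B w w)"
  using real_sqrt_le_mono[OF inner_product_Cauchy_Schwarz[OF assms, of v w]]
  by (simp add: real_sqrt_mult)

lemma inner_product_norm_triangle:
  assumes B: "is_inner_product B"
  shows "sqrt (B (x + y) (x + y)) \<le> sqrt (B x x) + sqrt (B y y)"
proof -
  have "B (x + y) (x + y) \<le> (sqrt (B x x) + sqrt (B y y))\<^sup>2"
    using inner_product_square_sum[OF B, of x y] inner_product_abs_le[OF B, of x y]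
      inner_product_laws(9)[OF B]
    by (simp add: power2_sum)
  then show ?thesis
    by (simp add: real_le_lsqrt inner_product_laws(9)[OF B])
qed

lemma sqrt_sum_squares_le_lambda:
  fixes P R q s M :: real
  assumes "0 \<le> P" "0 \<le> R" "0 \<le> s" "s < 1" "0 \<le> M"
    and ratio: "R \<le> M * P" and cosine: "q \<le> s * P * R"
  shows "sqrt (P\<^sup>2 + 2 * q + R\<^sup>2) \<le> P + (1 - (1 - s) / (M + 1)) * R"
proof -
  define d where "d = (1 - s) / (M + 1)"
  have "0 < d" "d \<le> 1"
    using assms unfolding d_def by (auto simp: field_simps)
  have s_eq: "s = 1 - d * (M + 1)"
    using \<open>0 \<le> M\<close> unfolding d_def by simp
  have "d * (2 - d) * R\<^sup>2 = 2 * d * R * R - (d * R)\<^sup>2"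
    by (simp add: power2_eq_square algebra_simps)
  then have "d * (2 - d) * R\<^sup>2 \<le> 2 * d * R * R"
    by simp
  also have "\<dots> \<le> 2 * d * R * (M * P)"
    using \<open>0 < d\<close> \<open>0 \<le> R\<close> ratio by (simp add: mult_left_mono)
  finally have "d * (2 - d) * R\<^sup>2 \<le> 2 * d * R * (M * P)" .
  then have "P\<^sup>2 + 2 * (s * P * R) + R\<^sup>2 \<le> (P + (1 - d) * R)\<^sup>2"
    unfolding s_eq by (simp add: power2_eq_square algebra_simps)
  then have "P\<^sup>2 + 2 * q + R\<^sup>2 \<le> (P + (1 - d) * R)\<^sup>2"
    using cosine by linarith
  moreover have "0 \<le> P + (1 - d) * R"
    using \<open>d \<le> 1\<close> assms(1,2) by simp
  ultimately show ?thesis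
    unfolding d_def by (simp add: real_le_lsqrt)
qed

locale norm_comparison =
  fixes B :: "real^'n \<Rightarrow> real^'n \<Rightarrow> real" and N :: "real^'n \<Rightarrow> real" and a b :: real
  assumes inner: "is_inner_product B" and norm: "is_norm N"
    and lower: "a * sqrt (B x x) \<le> N x" and upper: "N x \<le> b * sqrt (B x x)"
    and a_pos: "0 < a" and b_pos: "0 < b"
begin

lemma norm_scale: "N (c *\<^sub>R x) = \<bar>c\<bar> * N x"
  and norm_triangle: "N (x + y) \<le> N x + N y"
  using norm unfolding is_norm_def by auto

lemma inner_cosine_bound:
  assumes step: "N (v + w) \<le> N v" and q_pos: "0 < B v w"
  shows "(B v w)\<^sup>2 * (a\<^sup>2 + b\<^sup>2) \<le> b\<^sup>2 * B v v * B w w"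
proof -
  note laws = inner_product_laws[OF inner]
  define p q r where "p = B v v" and "q = B v w" and "r = B w w"
  have "v \<noteq> 0"
    using q_pos laws(6)[of 0 0 w] by auto
  then have "0 < p"
    using laws(9,10)[of v] unfolding p_def by auto
  define k where "k = q / p"
  define u where "u = w - k *\<^sub>R v"
  have "0 < k"
    using q_pos \<open>0 < p\<close> unfolding k_def q_def by simp
  have u_sq: "B u u = r - q\<^sup>2 / p"
    using inner_product_orthogonal_part[OF inner, of v w] \<open>0 < p\<close>
    unfolding u_def k_def p_def q_def r_def by simp
  \<comment> \<open>\<open>(1 + k) v = (v + w) - u\<close> with \<open>u\<close> orthogonal to \<open>v\<close>\<close>
  have "(1 + k) * N v \<le> N (v + w) + N u"
    using norm_triangle[of "v + w" "- u"] norm_scale[of "1 + k" v] norm_scale[of "-1" u] \<open>0 < k\<close>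
    by (simp add: u_def algebra_simps)
  then have "k * N v \<le> N u"
    using step by (simp add: algebra_simps)
  moreover have "k * (a * sqrt p) \<le> k * N v"
    using lower[of v] \<open>0 < k\<close> unfolding p_def by simp
  moreover have "N u \<le> b * sqrt (r - q\<^sup>2 / p)"
    using upper[of u] u_sq by simp
  ultimately have "k * (a * sqrt p) \<le> b * sqrt (r - q\<^sup>2 / p)"
    by linarith
  moreover have "0 \<le> k * (a * sqrt p)"
    using \<open>0 < k\<close> a_pos \<open>0 < p\<close> by simp
  ultimately have "(k * (a * sqrt p))\<^sup>2 \<le> (b * sqrt (r - q\<^sup>2 / p))\<^sup>2"
    by (rule power_mono)
  moreover have "(k * (a * sqrt p))\<^sup>2 = q\<^sup>2 / p * a\<^sup>2"
    using \<open>0 < p\<close> unfolding k_def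
    by (simp add: power_mult_distrib power_divide) (simp add: field_simps power2_eq_square)
  moreover have "(b * sqrt (r - q\<^sup>2 / p))\<^sup>2 = b\<^sup>2 * (r - q\<^sup>2 / p)"
    using laws(9)[of u] u_sq by (simp add: power_mult_distrib)
  ultimately have "q\<^sup>2 / p * a\<^sup>2 \<le> b\<^sup>2 * (r - q\<^sup>2 / p)"
    by simp
  then show ?thesis
    using \<open>0 < p\<close> unfolding p_def q_def r_def by (simp add: field_simps)
qed

lemma step_ratio_bound:
  assumes step: "N (v + w) \<le> N v"
  shows "sqrt (B w w) \<le> (b / a + 1) * sqrt (B v v)"
proof -
  have "a * sqrt (B (v + w) (v + w)) \<le> b * sqrt (B v v)"
    using lower[of "v + w"] upper[of v] step by linarith
  then have "sqrt (B (v + w) (v + w)) \<le> b / a * sqrt (B v v)"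
    using a_pos by (simp add: field_simps)
  moreover have "B (- v) (- v) = B v v"
    by (rule inner_product_laws(8)[OF inner])
  then have "sqrt (B w w) \<le> sqrt (B (v + w) (v + w)) + sqrt (B v v)"
    using inner_product_norm_triangle[OF inner, of "v + w" "- v"] by simp
  ultimately show ?thesis
    by (simp add: algebra_simps)
qed

lemma step_lambda_estimate:
  assumes step: "N (v + w) \<le> N v"
  shows "sqrt (B (v + w) (v + w)) \<le> sqrt (B v v) + expansion_lambda a b * sqrt (B w w)"
proof -
  define s where "s = b / sqrt (a\<^sup>2 + b\<^sup>2)"
  have "0 \<le> s"
    unfolding s_def using b_pos by simp
  have "s < 1"
    unfolding s_def using divide_sqrt_sum_squares_less_one a_pos by simp
  have "B v w \<le> s * sqrt (B v v) * sqrt (B w w)"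
  proof (cases "0 < B v w")
    case True
    have "0 < a\<^sup>2 + b\<^sup>2"
      using a_pos by (simp add: add_pos_nonneg)
    then have "(B v w)\<^sup>2 \<le> b\<^sup>2 * B v v * B w w / (a\<^sup>2 + b\<^sup>2)"
      using inner_cosine_bound[OF step True] by (simp add: pos_le_divide_eq)
    also have "\<dots> = s\<^sup>2 * B v v * B w w"
      unfolding s_def by (simp add: power_divide)
    finally have "(B v w)\<^sup>2 \<le> s\<^sup>2 * B v v * B w w" .
    then have "sqrt ((B v w)\<^sup>2) \<le> sqrt (s\<^sup>2 * B v v * B w w)"
      by (rule real_sqrt_le_mono)
    then show ?thesis
      using True \<open>0 \<le> s\<close> by (simp add: real_sqrt_mult)
  next
    case False
    have "0 \<le> s * sqrt (B v v) * sqrt (B w w)"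
      using \<open>0 \<le> s\<close> by (simp add: inner_product_laws(9)[OF inner])
    with False show ?thesis
      by linarith
  qed
  moreover have "0 \<le> b / a + 1"
    using a_pos b_pos by simp
  ultimately have "sqrt ((sqrt (B v v))\<^sup>2 + 2 * B v w + (sqrt (B w w))\<^sup>2)
      \<le> sqrt (B v v) + (1 - (1 - s) / (b / a + 1 + 1)) * sqrt (B w w)"
    by (intro sqrt_sum_squares_le_lambda real_sqrt_ge_zero \<open>0 \<le> s\<close> \<open>s < 1\<close>
        step_ratio_bound[OF step] inner_product_laws(9)[OF inner])
  then show ?thesis
    using inner_product_square_sum[OF inner, of v w] inner_product_laws(9)[OF inner]
    unfolding expansion_lambda_def s_def by (simp add: add.assoc)
qed

lemma self_expanded_imp_lambda_curve:
  assumes "self_expanded N I \<gamma>"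
  shows "lambda_curve (expansion_lambda a b) (\<lambda>x. sqrt (B x x)) I \<gamma>"
  unfolding lambda_curve_def
proof (intro ballI impI)
  fix t1 t2 t3
  assume "t1 \<in> I" "t2 \<in> I" "t3 \<in> I" and order: "t1 \<le> t2 \<and> t2 \<le> t3"
  define v w where "v = \<gamma> t1 - \<gamma> t3" and "w = \<gamma> t3 - \<gamma> t2"
  have sum: "v + w = \<gamma> t1 - \<gamma> t2" and diff: "\<gamma> t2 - \<gamma> t3 = - w"
    unfolding v_def w_def by simp_all
  have "N (\<gamma> t1 - \<gamma> t2) \<le> N v"
    using assms \<open>t1 \<in> I\<close> \<open>t2 \<in> I\<close> \<open>t3 \<in> I\<close> order
    unfolding self_expanded_def v_def by simp
  then have "N (v + w) \<le> N v"
    unfolding sum .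
  then show "sqrt (B (\<gamma> t1 - \<gamma> t2) (\<gamma> t1 - \<gamma> t2))
      \<le> sqrt (B (\<gamma> t1 - \<gamma> t3) (\<gamma> t1 - \<gamma> t3))
        + expansion_lambda a b * sqrt (B (\<gamma> t2 - \<gamma> t3) (\<gamma> t2 - \<gamma> t3))"
    unfolding sum[symmetric] diff inner_product_laws(8)[OF inner] v_def[symmetric]
    by (rule step_lambda_estimate)
qed

end

theorem proposition2p2:
  fixes a b :: real
  assumes "0 < a" and "0 < b"
  shows "\<exists>l < 1. \<forall>(E :: real^'n \<Rightarrow> real) (N :: real^'n \<Rightarrow> real) (I :: real set) (\<gamma> :: real \<Rightarrow> real^'n).
           euclidean_norm E \<longrightarrow> is_norm N \<longrightarrow>
           (\<forall>x. a * E x \<le> N x \<and> N x \<le> b * E x) \<longrightarrow>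
           is_interval I \<longrightarrow> self_expanded N I \<gamma> \<longrightarrow> lambda_curve l E I \<gamma>"
proof (intro exI[of _ "expansion_lambda a b"] conjI allI impI)
  show "expansion_lambda a b < 1"
    using assms by (rule expansion_lambda_less_one)
  fix E N :: "real^'n \<Rightarrow> real" and I and \<gamma> :: "real \<Rightarrow> real^'n"
  assume "euclidean_norm E" "is_norm N" and bounds: "\<forall>x. a * E x \<le> N x \<and> N x \<le> b * E x"
    and "self_expanded N I \<gamma>"
  then obtain B where "is_inner_product B" and E_eq: "E = (\<lambda>x. sqrt (B x x))"
    unfolding euclidean_norm_def by fast
  then interpret norm_comparison B N a b
    using \<open>is_norm N\<close> bounds assms by unfold_locales auto
  show "lambda_curve (expansion_lambda a b) E I \<gamma>"
    unfolding E_eq by (rule self_expanded_imp_lambda_curve) fact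
qed

end
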